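(* Let $t\in[1,2]$, $\rho_1=\frac{\|p_{\le A}\|_r^{r/t}}{\sqrt n\,\|p_{\le I}\|_r^{r/4}}$ (set to $0$ if $A=-\infty$) and $\rho_2=\frac{\|p_{>I}\|_1^{\frac{2-t}{t}}}{n^{\frac{2t-2}{t}}}$. Then $$\rho_1+\rho_2+\frac1n\asymp_\eta\sqrt{\frac{\|p_{\le I}\|_r}{n}}+\rho_2+\frac1n.$$
   Context: $p\in[0,1]^N$ with $p_1\ge\dots\ge p_N$ and $\max_jp_j\le1/2$; $n\ge2$; $\eta\in(0,1)$. $\|x\|_s=(\sum_j|x_j|^s)^{1/s}$; $r=\frac{2t}{4-t}$, $b=\frac{4-2t}{4-t}$; $x_{\le u}=(x_1,\dots,x_u,0,\dots,0)$, $x_{>u}=(0,\dots,0,x_{u+1},\dots,x_N)$. $I=\min\{J\in\{0,\dots,N\}:\sum_{i>J}p_i^2\le c_I/n^2\}$; $A=\max\{a\in\{1,\dots,I\}:p_a^{b/2}\ge c_A/(\sqrt n(\sum_{i\le I}p_i^r)^{1/4})\}$ with $\max\emptyset=-\infty$ and $x_{\le-\infty}=0$; $c_I,c_A>0$ are small constants depending only on $\eta$. $\asymp_\eta$ means equality up to multiplicative constants depending only on $\eta$. *)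

theory Defs
  imports Complex_Main
begin

text \<open>Vectors x in R^N are represented as functions nat => real, indices 1..N.\<close>

definition lnorm :: "nat \<Rightarrow> real \<Rightarrow> (nat \<Rightarrow> real) \<Rightarrow> real" where
  "lnorm N s x = (\<Sum>j=1..N. \<bar>x j\<bar> powr s) powr (1 / s)"

definition trunc_le :: "nat \<Rightarrow> (nat \<Rightarrow> real) \<Rightarrow> nat \<Rightarrow> real" where
  "trunc_le u x = (\<lambda>j. if j \<le> u then x j else 0)"

definition trunc_gt :: "nat \<Rightarrow> (nat \<Rightarrow> real) \<Rightarrow> nat \<Rightarrow> real" where
  "trunc_gt u x = (\<lambda>j. if u < j then x j else 0)"

definition r_exp :: "real \<Rightarrow> real" where
  "r_exp t = 2 * t / (4 - t)"

definition b_exp :: "real \<Rightarrow> real" where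
  "b_exp t = (4 - 2 * t) / (4 - t)"

text \<open>Real power with the convention 0^0 = 1.\<close>
definition pw :: "real \<Rightarrow> real \<Rightarrow> real" where
  "pw x e = (if e = 0 then 1 else x powr e)"

definition Iidx :: "nat \<Rightarrow> nat \<Rightarrow> real \<Rightarrow> (nat \<Rightarrow> real) \<Rightarrow> nat" where
  "Iidx N n cI p = (LEAST J. J \<le> N \<and> (\<Sum>i\<in>{J<..N}. (p i)\<^sup>2) \<le> cI / (real n)\<^sup>2)"

text \<open>The set whose maximum is A (A = -infinity iff this set is empty).\<close>
definition Aset :: "nat \<Rightarrow> nat \<Rightarrow> real \<Rightarrow> real \<Rightarrow> real \<Rightarrow> (nat \<Rightarrow> real) \<Rightarrow> nat set" where
  "Aset N n cI cA t p =
     (let I = Iidx N n cI p; r = r_exp t; b = b_exp t in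
      {a \<in> {1..I}. p a powr (b / 2) \<ge>
         cA / (sqrt (real n) * (\<Sum>i=1..I. p i powr r) powr (1/4))})"

definition rho1 :: "nat \<Rightarrow> nat \<Rightarrow> real \<Rightarrow> real \<Rightarrow> real \<Rightarrow> (nat \<Rightarrow> real) \<Rightarrow> real" where
  "rho1 N n cI cA t p =
     (let I = Iidx N n cI p; r = r_exp t; As = Aset N n cI cA t p in
      if As = {} then 0
      else lnorm N r (trunc_le (Max As) p) powr (r / t)
           / (sqrt (real n) * lnorm N r (trunc_le I p) powr (r / 4)))"

definition rho2 :: "nat \<Rightarrow> nat \<Rightarrow> real \<Rightarrow> real \<Rightarrow> (nat \<Rightarrow> real) \<Rightarrow> real" where
  "rho2 N n cI t p =
     (let I = Iidx N n cI p in
      pw (lnorm N 1 (trunc_gt I p)) ((2 - t) / t) / real n powr ((2 * t - 2) / t))"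

end

theory Submission
  imports Defs
begin

(*
  rho1 \<le> sqrt (||p_{<=I}||_r / n) because ||p_{<=A}||_r \<le> ||p_{<=I}||_r and r/t = 1/2 + r/4.
  Conversely, if I itself passes the threshold defining A, then A = I and rho1 equals
  sqrt (||p_{<=I}||_r / n). Otherwise p_I lies below the threshold, while minimality of I gives
  c_I/n^2 < sum_{i>=I} p_i^2 \<le> p_I^2 + p_I ||p_{>I}||_1, so p_I^2 or p_I ||p_{>I}||_1 exceeds
  c_I/(2n^2). After taking logarithms the threshold inequality is linear in ln p_I, ln n and
  ln ||p_{<=I}||_r with coefficients depending on t \<in> [1,2]; eliminating ln p_I bounds
  sqrt (||p_{<=I}||_r / n) by O(1/n) in the first case and by O(rho2) in the second.
*)

definition head_norm :: "nat \<Rightarrow> nat \<Rightarrow> real \<Rightarrow> real \<Rightarrow> (nat \<Rightarrow> real) \<Rightarrow> real" where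
  "head_norm N n cI t p = lnorm N (r_exp t) (trunc_le (Iidx N n cI p) p)"

lemma Iidx_le:
  assumes "0 < cI"
  shows "Iidx N n cI p \<le> N"
proof -
  have "N \<le> N \<and> (\<Sum>i\<in>{N<..N}. (p i)\<^sup>2) \<le> cI / (real n)\<^sup>2"
    using assms by simp
  then show ?thesis unfolding Iidx_def by (rule Least_le)
qed

lemma tail_sum_squares_gt_if_less_Iidx:
  assumes "J < Iidx N n cI p" "J \<le> N"
  shows "cI / (real n)\<^sup>2 < (\<Sum>i\<in>{J<..N}. (p i)\<^sup>2)"
  using not_less_Least[OF assms(1)[unfolded Iidx_def]] assms(2) by auto

lemma sum_squares_le_head_tail:
  fixes p :: "nat \<Rightarrow> real"
  assumes "\<forall>j\<in>{1..N}. 0 \<le> p j"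
    and "\<forall>i j. 1 \<le> i \<longrightarrow> i \<le> j \<longrightarrow> j \<le> N \<longrightarrow> p j \<le> p i"
    and "1 \<le> k" "k \<le> N"
  shows "(\<Sum>i\<in>{k - 1<..N}. (p i)\<^sup>2) \<le> (p k)\<^sup>2 + p k * (\<Sum>i\<in>{k<..N}. p i)"
proof -
  have "{k - 1<..N} = insert k {k<..N}"
    using assms(3,4) by auto
  then have "(\<Sum>i\<in>{k - 1<..N}. (p i)\<^sup>2) = (p k)\<^sup>2 + (\<Sum>i\<in>{k<..N}. (p i)\<^sup>2)"
    by simp
  also have "(\<Sum>i\<in>{k<..N}. (p i)\<^sup>2) \<le> (\<Sum>i\<in>{k<..N}. p k * p i)"
  proof (rule sum_mono)
    fix i assume "i \<in> {k<..N}"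
    then have "0 \<le> p i" "p i \<le> p k"
      using assms by auto
    then show "(p i)\<^sup>2 \<le> p k * p i"
      by (simp add: power2_eq_square mult_right_mono)
  qed
  finally show ?thesis
    by (simp add: sum_distrib_left)
qed

lemma lnorm_nonneg: "0 \<le> lnorm N s x"
  by (simp add: lnorm_def)

lemma lnorm_trunc_le:
  assumes "k \<le> N" "\<forall>j\<in>{1..N}. 0 \<le> p j"
  shows "lnorm N r (trunc_le k p) = (\<Sum>i=1..k. p i powr r) powr (1 / r)"
proof -
  have "(\<Sum>j=1..N. \<bar>trunc_le k p j\<bar> powr r) = (\<Sum>j=1..N. if j \<le> k then p j powr r else 0)"
    using assms(2) by (intro sum.cong) (auto simp: trunc_le_def)
  also have "\<dots> = (\<Sum>j\<in>{j\<in>{1..N}. j \<le> k}. p j powr r)"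
    by (rule sum.inter_filter[symmetric]) simp
  also have "{j\<in>{1..N}. j \<le> k} = {1..k}"
    using assms(1) by auto
  finally show ?thesis
    unfolding lnorm_def by simp
qed

lemma lnorm_trunc_le_mono:
  assumes "k \<le> k'" "k' \<le> N" "\<forall>j\<in>{1..N}. 0 \<le> p j" "0 < r"
  shows "lnorm N r (trunc_le k p) \<le> lnorm N r (trunc_le k' p)"
proof -
  have "(\<Sum>i=1..k. p i powr r) \<le> (\<Sum>i=1..k'. p i powr r)"
    using assms(1) by (intro sum_mono2) auto
  then have "(\<Sum>i=1..k. p i powr r) powr (1 / r) \<le> (\<Sum>i=1..k'. p i powr r) powr (1 / r)"
    using assms(4) by (intro powr_mono2 sum_nonneg) auto
  then show ?thesis
    using assms by (simp add: lnorm_trunc_le)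
qed

lemma lnorm_trunc_gt:
  assumes "\<forall>j\<in>{1..N}. 0 \<le> p j"
  shows "lnorm N 1 (trunc_gt k p) = (\<Sum>i\<in>{k<..N}. p i)"
proof -
  have "(\<Sum>j=1..N. \<bar>trunc_gt k p j\<bar> powr 1) = (\<Sum>j=1..N. if k < j then p j else 0)"
    using assms by (intro sum.cong) (auto simp: trunc_gt_def)
  also have "\<dots> = (\<Sum>j\<in>{j\<in>{1..N}. k < j}. p j)"
    by (rule sum.inter_filter[symmetric]) simp
  also have "{j\<in>{1..N}. k < j} = {k<..N}"
    by auto
  moreover have "0 \<le> (\<Sum>i\<in>{k<..N}. p i)"
    using assms by (intro sum_nonneg) auto
  ultimately show ?thesis
    unfolding lnorm_def by simp
qed

subsection \<open>Eliminating p_I in logarithmic form\<close>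

definition threshold_const :: "real \<Rightarrow> real \<Rightarrow> real" where
  "threshold_const cA cI = exp (3 * \<bar>ln cA\<bar> + \<bar>ln (cI / 2)\<bar>)"

lemma threshold_const_pos: "0 < threshold_const cA cI"
  by (simp add: threshold_const_def)

lemma sqrt_eq_exp_half_ln: "0 < z \<Longrightarrow> sqrt z = exp (ln z / 2)"
  by (simp add: powr_half_sqrt[symmetric] powr_def)

lemma pw_pos_eq_powr: "0 < x \<Longrightarrow> pw x e = x powr e"
  by (simp add: pw_def)

lemma below_threshold_log:
  fixes u x Y t c :: real
  assumes "0 < u" "0 < x" "0 < Y" "t < 4"
    and "u powr (b_exp t / 2) < c / (sqrt x * Y powr (r_exp t / 4))"
  shows "(4 - 2 * t) * ln u + (4 - t) * ln x + t * ln Y < 2 * (4 - t) * ln c"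
proof -
  have "u powr (b_exp t / 2) * (sqrt x * Y powr (r_exp t / 4)) < c"
    using assms by (simp add: pos_less_divide_eq)
  moreover have "0 < u powr (b_exp t / 2) * (sqrt x * Y powr (r_exp t / 4))"
    using assms by simp
  ultimately have "ln (u powr (b_exp t / 2) * (sqrt x * Y powr (r_exp t / 4))) < ln c"
    by simp
  then have "b_exp t / 2 * ln u + ln x / 2 + r_exp t / 4 * ln Y < ln c"
    using assms by (simp add: ln_mult ln_powr ln_sqrt)
  then have "2 * (4 - t) * (b_exp t / 2 * ln u + ln x / 2 + r_exp t / 4 * ln Y) < 2 * (4 - t) * ln c"
    using assms(4) by (intro mult_strict_left_mono) auto
  moreover have "2 * (4 - t) * (b_exp t / 2) = 4 - 2 * t" "2 * (4 - t) * (r_exp t / 4) = t"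
    using assms(4) by (simp_all add: b_exp_def r_exp_def field_simps)
  ultimately show ?thesis
    by (simp only: distrib_left mult.assoc[symmetric])
qed

lemma log_bound_large_head:
  fixes t lu lx ly lc lk :: real
  assumes "1 \<le> t" "t \<le> 2"
    and "(4 - 2 * t) * lu + (4 - t) * lx + t * ly < 2 * (4 - t) * lc"
    and "lk - lx \<le> lu"
  shows "(ly + lx) / 2 \<le> 3 * \<bar>lc\<bar> + \<bar>lk\<bar>"
proof -
  have "(4 - 2 * t) * (lk - lx) \<le> (4 - 2 * t) * lu"
    using assms by (intro mult_left_mono) auto
  moreover have "(4 - 2 * t) * (- lk) \<le> (4 - 2 * t) * \<bar>lk\<bar>" "(4 - t) * lc \<le> (4 - t) * \<bar>lc\<bar>"
    using assms by (intro mult_left_mono; simp)+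
  moreover have "\<bar>lc\<bar> \<le> t * \<bar>lc\<bar>" "\<bar>lk\<bar> \<le> t * \<bar>lk\<bar>"
    using assms by (simp_all add: mult_le_cancel_right1)
  ultimately have "t * (ly + lx) \<le> t * (6 * \<bar>lc\<bar> + 2 * \<bar>lk\<bar>)"
    using assms(3) by (simp add: algebra_simps)
  then show ?thesis
    using assms by simp
qed

lemma log_bound_heavy_tail:
  fixes t lu lx ly lc lk lL :: real
  assumes "1 \<le> t" "t \<le> 2"
    and "(4 - 2 * t) * lu + (4 - t) * lx + t * ly < 2 * (4 - t) * lc"
    and "lk - 2 * lx < lu + lL"
  shows "(ly - lx) / 2 \<le> 3 * \<bar>lc\<bar> + \<bar>lk\<bar> + (2 - t) / t * lL - (2 * t - 2) / t * lx"
proof -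
  have "(4 - 2 * t) * (lk - 2 * lx - lL) \<le> (4 - 2 * t) * lu"
    using assms by (intro mult_left_mono) auto
  moreover have "(4 - 2 * t) * (- lk) \<le> (4 - 2 * t) * \<bar>lk\<bar>" "(4 - t) * lc \<le> (4 - t) * \<bar>lc\<bar>"
    using assms by (intro mult_left_mono; simp)+
  moreover have "\<bar>lc\<bar> \<le> t * \<bar>lc\<bar>" "\<bar>lk\<bar> \<le> t * \<bar>lk\<bar>"
    using assms by (simp_all add: mult_le_cancel_right1)
  ultimately have "t * (ly - lx)
      \<le> 2 * t * (3 * \<bar>lc\<bar> + \<bar>lk\<bar>) + (4 - 2 * t) * lL - (4 * t - 4) * lx"
    using assms(3) by (simp add: algebra_simps)
  also have "\<dots> = 2 * t * (3 * \<bar>lc\<bar> + \<bar>lk\<bar> + (2 - t) / t * lL - (2 * t - 2) / t * lx)"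
    using assms by (simp add: field_simps)
  finally have "2 * t * ((ly - lx) / 2)
      \<le> 2 * t * (3 * \<bar>lc\<bar> + \<bar>lk\<bar> + (2 - t) / t * lL - (2 * t - 2) / t * lx)"
    by simp
  then show ?thesis
    by (rule mult_left_le_imp_le) (use assms in simp)
qed

lemma sqrt_ratio_le_if_large_head:
  fixes u x Y t cA cI :: real
  assumes "0 < cA" "0 < cI" "0 < x" "1 \<le> t" "t \<le> 2" "0 < u" "0 < Y"
    and "u powr (b_exp t / 2) < cA / (sqrt x * Y powr (r_exp t / 4))"
    and "cI / (2 * x\<^sup>2) \<le> u\<^sup>2"
  shows "sqrt (Y / x) \<le> threshold_const cA cI / x"
proof -
  have "ln (cI / (2 * x\<^sup>2)) \<le> ln (u\<^sup>2)"
    using assms by simp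
  then have "ln (cI / 2) - 2 * ln x \<le> 2 * ln u"
    using assms by (simp add: ln_div ln_mult ln_realpow)
  then have "ln (cI / 2) / 2 - ln x \<le> ln u"
    by linarith
  with below_threshold_log[OF assms(6,3,7) _ assms(8)] assms(4,5)
  have "(ln Y + ln x) / 2 \<le> 3 * \<bar>ln cA\<bar> + \<bar>ln (cI / 2) / 2\<bar>"
    by (intro log_bound_large_head) auto
  also have "\<dots> \<le> 3 * \<bar>ln cA\<bar> + \<bar>ln (cI / 2)\<bar>"
    by simp
  finally have "sqrt (Y * x) \<le> threshold_const cA cI"
    using assms by (simp add: sqrt_eq_exp_half_ln ln_mult threshold_const_def)
  moreover have "sqrt (Y / x) = sqrt (Y * x) / x"
    using assms by (simp add: real_sqrt_divide real_sqrt_mult field_simps)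
  ultimately show ?thesis
    using assms by (simp add: divide_right_mono)
qed

lemma sqrt_ratio_le_if_heavy_tail:
  fixes u L x Y t cA cI :: real
  assumes "0 < cA" "0 < cI" "0 < x" "1 \<le> t" "t \<le> 2" "0 < u" "0 < Y"
    and "u powr (b_exp t / 2) < cA / (sqrt x * Y powr (r_exp t / 4))"
    and "cI / (2 * x\<^sup>2) < u * L"
  shows "sqrt (Y / x) \<le> threshold_const cA cI * (pw L ((2 - t) / t) / x powr ((2 * t - 2) / t))"
proof -
  have "0 < cI / (2 * x\<^sup>2)"
    using assms by simp
  then have "0 < u * L"
    using assms(9) by linarith
  then have L: "0 < L"
    using assms(6) by (simp add: zero_less_mult_iff)
  have "ln (cI / (2 * x\<^sup>2)) < ln (u * L)"
    using assms \<open>0 < u * L\<close> by simp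
  then have "ln (cI / 2) - 2 * ln x < ln u + ln L"
    using assms L by (simp add: ln_div ln_mult ln_realpow)
  with below_threshold_log[OF assms(6,3,7) _ assms(8)] assms(4,5)
  have "(ln Y - ln x) / 2
      \<le> 3 * \<bar>ln cA\<bar> + \<bar>ln (cI / 2)\<bar> + (2 - t) / t * ln L - (2 * t - 2) / t * ln x"
    by (intro log_bound_heavy_tail) auto
  then have "exp ((ln Y - ln x) / 2)
      \<le> exp (3 * \<bar>ln cA\<bar> + \<bar>ln (cI / 2)\<bar> + (2 - t) / t * ln L - (2 * t - 2) / t * ln x)"
    by simp
  then show ?thesis
    using assms L
    by (simp add: sqrt_eq_exp_half_ln ln_div pw_pos_eq_powr powr_def exp_add exp_diff
        threshold_const_def)
qed

lemma sqrt_ratio_le_if_below_threshold: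
  fixes u L x Y t cA cI :: real
  assumes "0 < cA" "0 < cI" "0 < x" "1 \<le> t" "t \<le> 2" "0 \<le> u" "0 < Y"
    and "u powr (b_exp t / 2) < cA / (sqrt x * Y powr (r_exp t / 4))"
    and "cI / x\<^sup>2 < u\<^sup>2 + u * L"
  shows "sqrt (Y / x) \<le> threshold_const cA cI / x
      + threshold_const cA cI * (pw L ((2 - t) / t) / x powr ((2 * t - 2) / t))"
proof -
  have "0 < u"
    using assms by (cases "u = 0") (auto simp: divide_less_0_iff)
  consider "cI / (2 * x\<^sup>2) \<le> u\<^sup>2" | "cI / (2 * x\<^sup>2) < u * L"
    using assms(9) by fastforce
  then have "sqrt (Y / x) \<le> threshold_const cA cI / x
      \<or> sqrt (Y / x) \<le> threshold_const cA cI * (pw L ((2 - t) / t) / x powr ((2 * t - 2) / t))"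
    using sqrt_ratio_le_if_large_head[OF assms(1-5) \<open>0 < u\<close> assms(7,8)]
      sqrt_ratio_le_if_heavy_tail[OF assms(1-5) \<open>0 < u\<close> assms(7,8)]
    by cases auto
  moreover have "0 \<le> threshold_const cA cI / x"
    and "0 \<le> threshold_const cA cI * (pw L ((2 - t) / t) / x powr ((2 * t - 2) / t))"
    using assms threshold_const_pos[of cA cI] by (simp_all add: pw_def)
  ultimately show ?thesis
    by linarith
qed

lemma powr_r_exp_ratio:
  fixes Y x t :: real
  assumes "0 \<le> Y" "0 < x" "0 < t" "t < 4"
  shows "Y powr (r_exp t / t) / (sqrt x * Y powr (r_exp t / 4)) = sqrt (Y / x)"
proof (cases "Y = 0")
  case False
  have "r_exp t / t = 1 / 2 + r_exp t / 4"
    unfolding r_exp_def using assms(3,4) by (simp add: field_simps)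
  then have "Y powr (r_exp t / t) = sqrt Y * Y powr (r_exp t / 4)"
    using assms(1) False by (simp add: powr_add powr_half_sqrt)
  then show ?thesis
    using assms False by (simp add: real_sqrt_divide)
qed simp

lemma rho1_nonneg: "0 \<le> rho1 N n cI cA t p"
  by (simp add: rho1_def Let_def lnorm_def)

lemma rho2_nonneg: "0 \<le> rho2 N n cI t p"
  by (simp add: rho2_def Let_def pw_def)

lemma rho2_eq:
  assumes "\<forall>j\<in>{1..N}. 0 \<le> p j"
  shows "rho2 N n cI t p
    = pw (\<Sum>i\<in>{Iidx N n cI p<..N}. p i) ((2 - t) / t) / real n powr ((2 * t - 2) / t)"
  using assms by (simp add: rho2_def Let_def lnorm_trunc_gt)

lemma Aset_subset: "Aset N n cI cA t p \<subseteq> {1..Iidx N n cI p}"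
  by (auto simp: Aset_def Let_def)

lemma rho1_eq:
  assumes "Aset N n cI cA t p \<noteq> {}"
  shows "rho1 N n cI cA t p
    = lnorm N (r_exp t) (trunc_le (Max (Aset N n cI cA t p)) p) powr (r_exp t / t)
      / (sqrt n * head_norm N n cI t p powr (r_exp t / 4))"
  using assms by (simp add: rho1_def Let_def head_norm_def)

lemma rho1_le_sqrt_head_norm:
  assumes "0 < cI" "\<forall>j\<in>{1..N}. 0 \<le> p j" "0 < n" "0 < t" "t < 4"
  shows "rho1 N n cI cA t p \<le> sqrt (head_norm N n cI t p / n)"
proof (cases "Aset N n cI cA t p = {}")
  case True
  then have "rho1 N n cI cA t p = 0"
    by (simp add: rho1_def Let_def)
  then show ?thesis
    by (simp add: head_norm_def lnorm_nonneg)
next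
  case False
  define A where "A = Max (Aset N n cI cA t p)"
  have "0 < r_exp t"
    using assms by (simp add: r_exp_def)
  have "finite (Aset N n cI cA t p)"
    by (rule finite_subset[OF Aset_subset]) simp
  then have "A \<le> Iidx N n cI p"
    using Max_in[OF _ False] Aset_subset[of N n cI cA t p] unfolding A_def by auto
  then have "lnorm N (r_exp t) (trunc_le A p) \<le> head_norm N n cI t p"
    unfolding head_norm_def
    using Iidx_le[OF assms(1)] assms(2) \<open>0 < r_exp t\<close> by (rule lnorm_trunc_le_mono)
  then have "lnorm N (r_exp t) (trunc_le A p) powr (r_exp t / t)
      \<le> head_norm N n cI t p powr (r_exp t / t)"
    using \<open>0 < r_exp t\<close> assms(4) by (intro powr_mono2 lnorm_nonneg) simp_all
  then have "rho1 N n cI cA t p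
      \<le> head_norm N n cI t p powr (r_exp t / t) / (sqrt n * head_norm N n cI t p powr (r_exp t / 4))"
    unfolding rho1_eq[OF False] A_def[symmetric] by (rule divide_right_mono) simp
  also have "\<dots> = sqrt (head_norm N n cI t p / n)"
    using assms(3-5) lnorm_nonneg unfolding head_norm_def by (intro powr_r_exp_ratio) simp_all
  finally show ?thesis .
qed

lemma rho1_eq_sqrt_head_norm_if_Iidx_in_Aset:
  assumes "Iidx N n cI p \<in> Aset N n cI cA t p" "0 < n" "0 < t" "t < 4"
  shows "rho1 N n cI cA t p = sqrt (head_norm N n cI t p / n)"
proof -
  have "finite (Aset N n cI cA t p)"
    by (rule finite_subset[OF Aset_subset]) simp
  then have "Max (Aset N n cI cA t p) = Iidx N n cI p"
    using assms(1) Aset_subset[of N n cI cA t p] by (intro Max_eqI) auto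
  then have "rho1 N n cI cA t p
      = head_norm N n cI t p powr (r_exp t / t) / (sqrt n * head_norm N n cI t p powr (r_exp t / 4))"
    using rho1_eq[of N n cI cA t p] assms(1) by (auto simp: head_norm_def)
  also have "\<dots> = sqrt (head_norm N n cI t p / n)"
    using assms by (intro powr_r_exp_ratio) (auto simp: head_norm_def lnorm_nonneg)
  finally show ?thesis .
qed

lemma below_threshold_if_Iidx_notin_Aset:
  assumes "0 < cI" "\<forall>j\<in>{1..N}. 0 \<le> p j" "0 < t" "t < 4"
    and "1 \<le> Iidx N n cI p" "Iidx N n cI p \<notin> Aset N n cI cA t p"
  shows "p (Iidx N n cI p) powr (b_exp t / 2)
    < cA / (sqrt n * head_norm N n cI t p powr (r_exp t / 4))"
proof -
  define I where "I = Iidx N n cI p"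
  have "0 < r_exp t"
    using assms by (simp add: r_exp_def)
  then have "head_norm N n cI t p powr (r_exp t / 4) = (\<Sum>i=1..I. p i powr r_exp t) powr (1 / 4)"
    using lnorm_trunc_le[OF Iidx_le[OF assms(1)] assms(2)]
    by (simp add: head_norm_def I_def powr_powr)
  moreover have "\<not> cA / (sqrt n * (\<Sum>i=1..I. p i powr r_exp t) powr (1 / 4)) \<le> p I powr (b_exp t / 2)"
    using assms(5,6) unfolding Aset_def Let_def I_def by simp
  ultimately show ?thesis
    unfolding I_def by simp
qed

lemma sqrt_head_norm_le:
  assumes "0 < cI" "0 < cA" "\<forall>j\<in>{1..N}. 0 \<le> p j"
    and "\<forall>i j. 1 \<le> i \<longrightarrow> i \<le> j \<longrightarrow> j \<le> N \<longrightarrow> p j \<le> p i"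
    and "0 < n" "1 \<le> t" "t \<le> 2"
  shows "sqrt (head_norm N n cI t p / n)
    \<le> rho1 N n cI cA t p + threshold_const cA cI / n + threshold_const cA cI * rho2 N n cI t p"
proof -
  define I where "I = Iidx N n cI p"
  have rest: "0 \<le> threshold_const cA cI / n + threshold_const cA cI * rho2 N n cI t p"
    using threshold_const_pos[of cA cI] rho2_nonneg[of N n cI t p] by simp
  have "0 \<le> head_norm N n cI t p"
    by (simp add: head_norm_def lnorm_nonneg)
  then consider (passes) "I \<in> Aset N n cI cA t p"
    | (vanishes) "head_norm N n cI t p = 0"
    | (below) "I \<notin> Aset N n cI cA t p" "0 < head_norm N n cI t p"
    by (cases "I \<in> Aset N n cI cA t p") (auto simp: order_le_less)
  then show ?thesis
  proof cases
    case passes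
    then show ?thesis
      using rest assms rho1_eq_sqrt_head_norm_if_Iidx_in_Aset[of N n cI p] by (simp add: I_def)
  next
    case vanishes
    then show ?thesis
      using rest rho1_nonneg[of N n cI cA t p] by simp
  next
    case below
    have "I \<le> N"
      unfolding I_def using assms(1) by (rule Iidx_le)
    have "1 \<le> I"
      using below(2) lnorm_trunc_le[of 0 N p] assms(3) by (cases I) (auto simp: head_norm_def I_def)
    have "cI / (real n)\<^sup>2 < (\<Sum>i\<in>{I - 1<..N}. (p i)\<^sup>2)"
      using \<open>1 \<le> I\<close> \<open>I \<le> N\<close> unfolding I_def by (intro tail_sum_squares_gt_if_less_Iidx) auto
    also have "\<dots> \<le> (p I)\<^sup>2 + p I * (\<Sum>i\<in>{I<..N}. p i)"
      using assms(3,4) \<open>1 \<le> I\<close> \<open>I \<le> N\<close> by (rule sum_squares_le_head_tail)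
    finally have mass: "cI / (real n)\<^sup>2 < (p I)\<^sup>2 + p I * (\<Sum>i\<in>{I<..N}. p i)" .
    have "p I powr (b_exp t / 2) < cA / (sqrt n * head_norm N n cI t p powr (r_exp t / 4))"
      using below_threshold_if_Iidx_notin_Aset[of cI N p t n cA] assms(1,3,6,7) \<open>1 \<le> I\<close> below(1)
      unfolding I_def by simp
    with mass have "sqrt (head_norm N n cI t p / n) \<le> threshold_const cA cI / n
        + threshold_const cA cI * (pw (\<Sum>i\<in>{I<..N}. p i) ((2 - t) / t) / n powr ((2 * t - 2) / t))"
      using below(2) assms(1-3,5-7) \<open>1 \<le> I\<close> \<open>I \<le> N\<close>
      by (intro sqrt_ratio_le_if_below_threshold) auto
    then show ?thesis
      using rho1_nonneg[of N n cI cA t p] assms(3) by (simp add: rho2_eq I_def)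
  qed
qed

lemma sandwich_equiv:
  fixes a b s z K :: real
  assumes "0 \<le> a" "0 \<le> b" "0 \<le> z" "0 \<le> K" "a \<le> s" "s \<le> a + K * z + K * b"
  shows "a + b + z \<le> (1 + K) * (s + b + z) \<and> s + b + z \<le> (1 + K) * (a + b + z)"
proof -
  have "0 \<le> K * s" "0 \<le> K * b" "0 \<le> K * z" "0 \<le> K * a"
    using assms by simp_all
  with assms show ?thesis
    unfolding distrib_left distrib_right mult_1_left by linarith
qed

lemma rho_sum_equiv:
  assumes "0 < cI" "0 < cA" "\<forall>j\<in>{1..N}. 0 \<le> p j"
    and "\<forall>i j. 1 \<le> i \<longrightarrow> i \<le> j \<longrightarrow> j \<le> N \<longrightarrow> p j \<le> p i"
    and "0 < n" "1 \<le> t" "t \<le> 2"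
  defines "L \<equiv> rho1 N n cI cA t p + rho2 N n cI t p + 1 / n"
    and "R \<equiv> sqrt (head_norm N n cI t p / n) + rho2 N n cI t p + 1 / n"
  shows "L \<le> (1 + threshold_const cA cI) * R \<and> R \<le> (1 + threshold_const cA cI) * L"
proof -
  have "sqrt (head_norm N n cI t p / n)
      \<le> rho1 N n cI cA t p + threshold_const cA cI * (1 / n) + threshold_const cA cI * rho2 N n cI t p"
    using sqrt_head_norm_le[OF assms(1-7)] by simp
  moreover have "rho1 N n cI cA t p \<le> sqrt (head_norm N n cI t p / n)"
    using assms by (intro rho1_le_sqrt_head_norm) auto
  ultimately show ?thesis
    unfolding L_def R_def using threshold_const_pos[of cA cI]
    by (intro sandwich_equiv rho1_nonneg rho2_nonneg) simp_all
qed

theorem lemmaA7: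
  fixes cI cA :: "real \<Rightarrow> real"
  assumes "\<forall>\<eta>::real. 0 < \<eta> \<and> \<eta> < 1 \<longrightarrow> cI \<eta> > 0 \<and> cA \<eta> > 0"
  shows "\<forall>\<eta>::real. 0 < \<eta> \<and> \<eta> < 1 \<longrightarrow>
    (\<exists>C>0. \<forall>(N::nat) (p::nat \<Rightarrow> real) (n::nat) (t::real).
       (\<forall>j\<in>{1..N}. 0 \<le> p j \<and> p j \<le> 1/2) \<and>
       (\<forall>i j. 1 \<le> i \<longrightarrow> i \<le> j \<longrightarrow> j \<le> N \<longrightarrow> p j \<le> p i) \<and>
       2 \<le> n \<and> 1 \<le> t \<and> t \<le> 2 \<longrightarrow>
       (let L = rho1 N n (cI \<eta>) (cA \<eta>) t p + rho2 N n (cI \<eta>) t p + 1 / real n;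
            R = sqrt (lnorm N (r_exp t) (trunc_le (Iidx N n (cI \<eta>) p) p) / real n)
                + rho2 N n (cI \<eta>) t p + 1 / real n
        in L \<le> C * R \<and> R \<le> C * L))"
proof (intro allI impI, goal_cases)
  case (1 \<eta>)
  with assms have "0 < cI \<eta>" "0 < cA \<eta>"
    by auto
  with rho_sum_equiv[of "cI \<eta>" "cA \<eta>", unfolded head_norm_def]
    threshold_const_pos[of "cA \<eta>" "cI \<eta>"]
  show ?case
    unfolding Let_def by (intro exI[of _ "1 + threshold_const (cA \<eta>) (cI \<eta>)"]) auto
qed

end
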